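(* The fully shifted sub-local transition function $\underline{\delta}:\mathrm{Sub}\to\mathrm{Conf}$ is the right Kan extension of the fully shifted local transition function $\overline{\delta}:\mathrm{Loc}\to\mathrm{Conf}$ along the inclusion $i:\mathrm{Loc}\to\mathrm{Sub}$. That is, $\underline{\delta}$ is monotonic, $\underline{\delta}\circ i\Rightarrow\overline{\delta}$, and for every monotonic $f:\mathrm{Sub}\to\mathrm{Conf}$ with $f\circ i\Rightarrow\overline{\delta}$ we have $f\Rightarrow\underline{\delta}$.
   Context: A cellular automaton is given by a group $G$, a neighborhood $N\subseteq G$ (not necessarily finite), a finite set of states $Q$ and $\delta:Q^N\to Q$. $\mathrm{Conf}$ is the set of partial functions $G\to Q$ with support $|c|$; $c\restriction S$ is restriction to $S\cap|c|$; $\mathrm{Conf}$ is partially ordered by $c\preceq c'$ iff for all $g\in|c|$, $g\in|c'|$ and $c(g)=c'(g)$. For $c\in\mathrm{Conf}$, $g\in G$, $c\blacktriangleleft g$ has support $\{h\mid g\cdot h\in|c|\}$ and $(c\blacktriangleleft g)(h)=c(g\cdot h)$. $g\cdot M=\{g\cdot m\mid m\in M\}$. $c_g=c\restriction(g\cdot N\cap|c|)$; $\det(c)=\{g\in G\mid \exists q\in Q\ \forall c'\in Q^{g\cdot N}:\ c'\restriction|c_g|=c_g\implies \delta(c'\blacktriangleleft g)=q\}$ and $q_{c,g}$ is the unique such $q$. $\mathrm{Loc}=\bigcup_{g\in G}(\{g\}\times Q^{g\cdot N})$ with the trivial order (equality); $\overline{\delta}(g,c)$ is the configuration with support $\{g\}$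 and value $\delta(c\blacktriangleleft g)$. $\mathrm{Sub}=\bigcup_{g\in G,\,M\subseteq N}(\{g\}\times Q^{g\cdot M})$ ordered by $(g,c)\preceq(g',c')$ iff $g=g'$ and $c\preceq c'$; $\mathrm{Loc}\subseteq\mathrm{Sub}$. $\underline{\delta}(g,c)$ is the configuration with support $\{g\}\cap\det(c)$ and, if $g\in\det(c)$, value $q_{c,g}$. For posets $X,Y$, $f:X\to Y$ is monotonic if $x\preceq x'\Rightarrow f(x)\preceq f(x')$; for monotonic $f,f'$, $f\Rightarrow f'$ iff $f(x)\preceq f'(x)$ for all $x$. Given posets $A,B,C$ and monotonic $i:A\to B$, $f:A\to C$, a monotonic $g:B\to C$ is the right Kan extension of $f$ along $i$ if it is the $\Rightarrow$-maximum of $\{h:B\to C\text{ monotonic}\mid h\circ i\Rightarrow f\}$. *)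

theory Defs
  imports Main
begin

text \<open>Group G is a type of class group_add (group operation written +, possibly
non-commutative). Configurations are partial maps 'g \<rightharpoonup> 'q; support = dom.
Q^M is the set of partial maps with domain exactly M.  The local rule
delta is a function on configurations; only its values on Q^N matter.\<close>

definition conf_le :: "('g \<rightharpoonup> 'q) \<Rightarrow> ('g \<rightharpoonup> 'q) \<Rightarrow> bool" where
  "conf_le c c' \<longleftrightarrow> (\<forall>g\<in>dom c. g \<in> dom c' \<and> c g = c' g)"

definition shift :: "('g::group_add \<rightharpoonup> 'q) \<Rightarrow> 'g \<Rightarrow> ('g \<rightharpoonup> 'q)" where
  "shift c g = (\<lambda>h. c (g + h))"

definition lmult :: "'g::group_add \<Rightarrow> 'g set \<Rightarrow> 'g set" where
  "lmult g M = {g + m | m. m \<in> M}"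

definition confs_on :: "'g set \<Rightarrow> ('g \<rightharpoonup> 'q) set" where
  "confs_on M = {c. dom c = M}"

definition restr :: "('g \<rightharpoonup> 'q) \<Rightarrow> 'g set \<Rightarrow> ('g \<rightharpoonup> 'q)" where
  "restr c S = c |` S"

definition cg :: "'g::group_add set \<Rightarrow> ('g \<rightharpoonup> 'q) \<Rightarrow> 'g \<Rightarrow> ('g \<rightharpoonup> 'q)" where
  "cg N c g = restr c (lmult g N \<inter> dom c)"

definition det_at :: "'g::group_add set \<Rightarrow> (('g \<rightharpoonup> 'q) \<Rightarrow> 'q) \<Rightarrow> ('g \<rightharpoonup> 'q) \<Rightarrow> 'g \<Rightarrow> 'q \<Rightarrow> bool" where
  "det_at N \<delta> c g q \<longleftrightarrow>
     (\<forall>c'\<in>confs_on (lmult g N). restr c' (dom (cg N c g)) = cg N c g \<longrightarrow> \<delta> (shift c' g) = q)"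

definition det :: "'g::group_add set \<Rightarrow> (('g \<rightharpoonup> 'q) \<Rightarrow> 'q) \<Rightarrow> ('g \<rightharpoonup> 'q) \<Rightarrow> 'g set" where
  "det N \<delta> c = {g. \<exists>q. det_at N \<delta> c g q}"

definition qcg :: "'g::group_add set \<Rightarrow> (('g \<rightharpoonup> 'q) \<Rightarrow> 'q) \<Rightarrow> ('g \<rightharpoonup> 'q) \<Rightarrow> 'g \<Rightarrow> 'q" where
  "qcg N \<delta> c g = (THE q. det_at N \<delta> c g q)"

definition Loc :: "'g::group_add set \<Rightarrow> ('g \<times> ('g \<rightharpoonup> 'q)) set" where
  "Loc N = {(g, c). c \<in> confs_on (lmult g N)}"

definition Sub :: "'g::group_add set \<Rightarrow> ('g \<times> ('g \<rightharpoonup> 'q)) set" where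
  "Sub N = {(g, c). \<exists>M\<subseteq>N. c \<in> confs_on (lmult g M)}"

definition loc_le :: "('g \<times> ('g \<rightharpoonup> 'q)) \<Rightarrow> ('g \<times> ('g \<rightharpoonup> 'q)) \<Rightarrow> bool" where
  "loc_le x y \<longleftrightarrow> x = y"

definition sub_le :: "('g \<times> ('g \<rightharpoonup> 'q)) \<Rightarrow> ('g \<times> ('g \<rightharpoonup> 'q)) \<Rightarrow> bool" where
  "sub_le x y \<longleftrightarrow> fst x = fst y \<and> conf_le (snd x) (snd y)"

definition delta_bar :: "(('g::group_add \<rightharpoonup> 'q) \<Rightarrow> 'q) \<Rightarrow> ('g \<times> ('g \<rightharpoonup> 'q)) \<Rightarrow> ('g \<rightharpoonup> 'q)" where
  "delta_bar \<delta> x = [fst x \<mapsto> \<delta> (shift (snd x) (fst x))]"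

definition delta_under :: "'g::group_add set \<Rightarrow> (('g \<rightharpoonup> 'q) \<Rightarrow> 'q) \<Rightarrow> ('g \<times> ('g \<rightharpoonup> 'q)) \<Rightarrow> ('g \<rightharpoonup> 'q)" where
  "delta_under N \<delta> x =
     (if fst x \<in> det N \<delta> (snd x) then [fst x \<mapsto> qcg N \<delta> (snd x) (fst x)] else Map.empty)"

definition nat_le :: "'a set \<Rightarrow> ('c \<Rightarrow> 'c \<Rightarrow> bool) \<Rightarrow> ('a \<Rightarrow> 'c) \<Rightarrow> ('a \<Rightarrow> 'c) \<Rightarrow> bool" where
  "nat_le X ordC f f' \<longleftrightarrow> (\<forall>x\<in>X. ordC (f x) (f' x))"

text \<open>Right Kan extension of f : A \<rightarrow> C along i : A \<rightarrow> B (posets given by carriers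
and orders; C is the whole type).\<close>
definition right_kan_ext ::
  "'a set \<Rightarrow> ('a \<Rightarrow> 'a \<Rightarrow> bool) \<Rightarrow> 'b set \<Rightarrow> ('b \<Rightarrow> 'b \<Rightarrow> bool) \<Rightarrow> ('c \<Rightarrow> 'c \<Rightarrow> bool)
   \<Rightarrow> ('a \<Rightarrow> 'b) \<Rightarrow> ('a \<Rightarrow> 'c) \<Rightarrow> ('b \<Rightarrow> 'c) \<Rightarrow> bool" where
  "right_kan_ext A ordA B ordB ordC i f g \<longleftrightarrow>
     i ` A \<subseteq> B \<and> monotone_on A ordA ordB i \<and> monotone_on A ordA ordC f \<and>
     monotone_on B ordB ordC g \<and> nat_le A ordC (g \<circ> i) f \<and>
     (\<forall>h. monotone_on B ordB ordC h \<and> nat_le A ordC (h \<circ> i) f \<longrightarrow> nat_le B ordC h g)"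

end

theory Submission
  imports Defs
begin

text \<open>For a sub-local configuration \<open>c\<close> on \<open>g + M\<close>, \<open>g \<in> det c\<close> means that \<open>\<delta>\<close> takes
  the same value on every completion of \<open>c\<close> to \<open>g + N\<close>, and \<open>delta_under\<close> returns that
  common value. This makes \<open>delta_under\<close> monotone, and below \<open>delta_bar\<close> on local
  configurations, which are their own only completion. Conversely, a monotone \<open>f\<close> below
  \<open>delta_bar\<close> on \<open>Loc\<close> satisfies \<open>f (g, c) \<subseteq>\<^sub>m f (g, c') \<subseteq>\<^sub>m delta_bar (g, c')\<close> for every
  completion \<open>c'\<close>; so \<open>f (g, c)\<close> is either empty or a single value at \<open>g\<close> shared by all
  completions, which then witnesses \<open>g \<in> det c\<close>.\<close>

lemma conf_le_iff_map_le: "conf_le c c' \<longleftrightarrow> c \<subseteq>\<^sub>m c'"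
  unfolding conf_le_def map_le_def by (metis domIff)

lemma restrict_dom_eq_iff_map_le: "m' |` dom m = m \<longleftrightarrow> m \<subseteq>\<^sub>m m'"
proof
  assume "m' |` dom m = m"
  then show "m \<subseteq>\<^sub>m m'"
    unfolding map_le_def by (metis restrict_in)
next
  assume "m \<subseteq>\<^sub>m m'"
  then show "m' |` dom m = m"
    unfolding map_le_def by (intro ext) (metis domIff restrict_in restrict_out)
qed

lemma map_le_dom_subset_imp_eq: "m \<subseteq>\<^sub>m m' \<Longrightarrow> dom m' \<subseteq> dom m \<Longrightarrow> m' = m"
  by (metis map_le_antisym map_le_def map_le_implies_dom_le subset_antisym)

lemma map_le_singleton_iff: "m \<subseteq>\<^sub>m [a \<mapsto> b] \<longleftrightarrow> m = Map.empty \<or> m = [a \<mapsto> b]"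
proof
  assume le: "m \<subseteq>\<^sub>m [a \<mapsto> b]"
  then have dom_m: "dom m \<subseteq> {a}"
    using map_le_implies_dom_le by fastforce
  show "m = Map.empty \<or> m = [a \<mapsto> b]"
  proof (cases "a \<in> dom m")
    case True
    with dom_m have "dom [a \<mapsto> b] \<subseteq> dom m"
      by simp
    with le show ?thesis
      using map_le_dom_subset_imp_eq by metis
  next
    case False
    with dom_m show ?thesis
      by auto
  qed
qed auto

lemma ex_map_le_dom_eq:
  assumes "dom m \<subseteq> S"
  shows "\<exists>m'. dom m' = S \<and> m \<subseteq>\<^sub>m m'"
proof -
  define m' where "m' x = (if x \<in> dom m then m x else if x \<in> S then Some undefined else None)" for x
  have "dom m' = S"
    using assms unfolding m'_def dom_def by (auto split: if_splits)
  moreover have "m \<subseteq>\<^sub>m m'"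
    unfolding map_le_def m'_def by simp
  ultimately show ?thesis by blast
qed

lemma Sub_dom_subset: "(g, c) \<in> Sub N \<Longrightarrow> dom c \<subseteq> lmult g N"
  unfolding Sub_def confs_on_def lmult_def by auto blast

lemma Loc_iff: "(g, c) \<in> Loc N \<longleftrightarrow> dom c = lmult g N"
  unfolding Loc_def confs_on_def by simp

lemma Loc_subset_Sub: "Loc N \<subseteq> Sub N"
  unfolding Loc_def Sub_def by auto

lemma cg_eq_self: "dom c \<subseteq> lmult g N \<Longrightarrow> cg N c g = c"
  unfolding cg_def restr_def by (metis inf.absorb2 restrict_dom_eq_iff_map_le map_le_refl)

lemma det_at_iff_completions:
  assumes "dom c \<subseteq> lmult g N"
  shows "det_at N \<delta> c g q \<longleftrightarrow> (\<forall>c'. dom c' = lmult g N \<and> c \<subseteq>\<^sub>m c' \<longrightarrow> \<delta> (shift c' g) = q)"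
  unfolding det_at_def cg_eq_self[OF assms] confs_on_def restr_def restrict_dom_eq_iff_map_le
  by blast

lemma det_at_unique:
  assumes "dom c \<subseteq> lmult g N" "det_at N \<delta> c g q" "det_at N \<delta> c g q'"
  shows "q = q'"
proof -
  obtain c' where "dom c' = lmult g N" "c \<subseteq>\<^sub>m c'"
    using ex_map_le_dom_eq[OF assms(1)] by blast
  then show ?thesis
    using assms(2,3) unfolding det_at_iff_completions[OF assms(1)] by metis
qed

lemma delta_under_eq:
  assumes "dom c \<subseteq> lmult g N" "det_at N \<delta> c g q"
  shows "delta_under N \<delta> (g, c) = [g \<mapsto> q]"
proof -
  have "qcg N \<delta> c g = q"
    unfolding qcg_def
  proof (rule the_equality)
    show "det_at N \<delta> c g q"
      by (fact assms(2))
    show "q' = q" if "det_at N \<delta> c g q'" for q'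
      using det_at_unique[OF assms(1) that assms(2)] .
  qed
  moreover have "g \<in> det N \<delta> c"
    using assms(2) unfolding det_def by blast
  ultimately show ?thesis
    unfolding delta_under_def by simp
qed

lemma det_at_mono:
  assumes dom_c': "dom c' \<subseteq> lmult g N" and le: "c \<subseteq>\<^sub>m c'" and det_c: "det_at N \<delta> c g q"
  shows "det_at N \<delta> c' g q"
proof -
  have dom_c: "dom c \<subseteq> lmult g N"
    using dom_c' le map_le_implies_dom_le by blast
  show ?thesis
    unfolding det_at_iff_completions[OF dom_c']
  proof (intro allI impI)
    fix c'' assume "dom c'' = lmult g N \<and> c' \<subseteq>\<^sub>m c''"
    with le have "dom c'' = lmult g N \<and> c \<subseteq>\<^sub>m c''"
      using map_le_trans by blast
    with det_c show "\<delta> (shift c'' g) = q"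
      unfolding det_at_iff_completions[OF dom_c] by blast
  qed
qed

lemma det_at_local:
  assumes "dom c = lmult g N"
  shows "det_at N \<delta> c g (\<delta> (shift c g))"
  unfolding det_at_iff_completions[OF equalityD1[OF assms]]
  using assms map_le_dom_subset_imp_eq by (metis order_refl)

lemma monotone_delta_under:
  fixes N :: "'g::group_add set" and \<delta> :: "('g \<rightharpoonup> 'q) \<Rightarrow> 'q"
  shows "monotone_on (Sub N) sub_le conf_le (delta_under N \<delta>)"
proof (rule monotone_onI)
  fix x y :: "'g \<times> ('g \<rightharpoonup> 'q)"
  assume "x \<in> Sub N" "y \<in> Sub N" "sub_le x y"
  then obtain g c c' where x: "x = (g, c)" and y: "y = (g, c')" and le: "c \<subseteq>\<^sub>m c'"
    and dom_c: "dom c \<subseteq> lmult g N" and dom_c': "dom c' \<subseteq> lmult g N"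
    unfolding sub_le_def conf_le_iff_map_le by (metis Sub_dom_subset prod.collapse)
  show "conf_le (delta_under N \<delta> x) (delta_under N \<delta> y)"
  proof (cases "g \<in> det N \<delta> c")
    case True
    then obtain q where "det_at N \<delta> c g q"
      unfolding det_def by blast
    then show ?thesis
      using delta_under_eq det_at_mono dom_c dom_c' le x y
      by (metis conf_le_iff_map_le map_le_refl)
  next
    case False
    then show ?thesis
      unfolding x delta_under_def by (simp add: conf_le_iff_map_le)
  qed
qed

lemma delta_under_le_delta_bar:
  fixes N :: "'g::group_add set" and \<delta> :: "('g \<rightharpoonup> 'q) \<Rightarrow> 'q"
  shows "nat_le (Loc N) conf_le (delta_under N \<delta> \<circ> id) (delta_bar \<delta>)"
  unfolding nat_le_def
proof
  fix x :: "'g \<times> ('g \<rightharpoonup> 'q)"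
  assume "x \<in> Loc N"
  then obtain g c where x: "x = (g, c)" and dom_c: "dom c = lmult g N"
    by (metis Loc_iff prod.collapse)
  have "delta_under N \<delta> (g, c) = [g \<mapsto> \<delta> (shift c g)]"
    using delta_under_eq[OF equalityD1 det_at_local, OF dom_c dom_c] .
  then show "conf_le ((delta_under N \<delta> \<circ> id) x) (delta_bar \<delta> x)"
    by (simp add: x delta_bar_def conf_le_iff_map_le)
qed

lemma le_delta_under_if_le_delta_bar:
  fixes N :: "'g::group_add set" and \<delta> :: "('g \<rightharpoonup> 'q) \<Rightarrow> 'q"
    and f :: "'g \<times> ('g \<rightharpoonup> 'q) \<Rightarrow> ('g \<rightharpoonup> 'q)"
  assumes mono: "monotone_on (Sub N) sub_le conf_le f"
    and below: "nat_le (Loc N) conf_le (f \<circ> id) (delta_bar \<delta>)"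
  shows "nat_le (Sub N) conf_le f (delta_under N \<delta>)"
  unfolding nat_le_def
proof
  fix x :: "'g \<times> ('g \<rightharpoonup> 'q)"
  assume x_Sub: "x \<in> Sub N"
  then obtain g c where x: "x = (g, c)" and dom_c: "dom c \<subseteq> lmult g N"
    by (metis Sub_dom_subset prod.collapse)
  have below_completion: "f (g, c) \<subseteq>\<^sub>m [g \<mapsto> \<delta> (shift c' g)]"
    if "dom c' = lmult g N" "c \<subseteq>\<^sub>m c'" for c'
  proof -
    have loc: "(g, c') \<in> Loc N"
      using that(1) by (simp add: Loc_iff)
    have "f (g, c) \<subseteq>\<^sub>m f (g, c')"
      using mono x x_Sub loc Loc_subset_Sub that(2)
      unfolding monotone_on_def sub_le_def conf_le_iff_map_le by (metis fst_conv snd_conv subsetD)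
    moreover have "f (g, c') \<subseteq>\<^sub>m delta_bar \<delta> (g, c')"
      using below loc unfolding nat_le_def conf_le_iff_map_le by simp
    ultimately show ?thesis
      by (auto simp: delta_bar_def intro: map_le_trans)
  qed
  obtain c\<^sub>0 where c\<^sub>0: "dom c\<^sub>0 = lmult g N" "c \<subseteq>\<^sub>m c\<^sub>0"
    using ex_map_le_dom_eq[OF dom_c] by blast
  then have "f (g, c) \<subseteq>\<^sub>m [g \<mapsto> \<delta> (shift c\<^sub>0 g)]"
    by (rule below_completion)
  then consider "f (g, c) = Map.empty" | "f (g, c) = [g \<mapsto> \<delta> (shift c\<^sub>0 g)]"
    unfolding map_le_singleton_iff by blast
  then show "conf_le (f x) (delta_under N \<delta> x)"
  proof cases
    case 1
    then show ?thesis
      by (simp add: x conf_le_iff_map_le)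
  next
    case 2
    have "det_at N \<delta> c g (\<delta> (shift c\<^sub>0 g))"
      unfolding det_at_iff_completions[OF dom_c]
    proof (intro allI impI)
      fix c' assume "dom c' = lmult g N \<and> c \<subseteq>\<^sub>m c'"
      then have "[g \<mapsto> \<delta> (shift c\<^sub>0 g)] \<subseteq>\<^sub>m [g \<mapsto> \<delta> (shift c' g)]"
        using below_completion 2 by simp
      then show "\<delta> (shift c' g) = \<delta> (shift c\<^sub>0 g)"
        by (simp add: map_le_def)
    qed
    then show ?thesis
      using 2 delta_under_eq[OF dom_c] x by (simp add: conf_le_iff_map_le)
  qed
qed

theorem mainTheorem15:
  fixes N :: "'g::group_add set" and \<delta> :: "('g \<rightharpoonup> 'q::finite) \<Rightarrow> 'q"
  shows "right_kan_ext (Loc N) loc_le (Sub N) sub_le conf_le id (delta_bar \<delta>) (delta_under N \<delta>)"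
  unfolding right_kan_ext_def
proof (intro conjI allI impI)
  show "id ` Loc N \<subseteq> Sub N"
    using Loc_subset_Sub by simp
  show "monotone_on (Loc N) loc_le sub_le id" "monotone_on (Loc N) loc_le conf_le (delta_bar \<delta>)"
    unfolding monotone_on_def loc_le_def sub_le_def by (auto simp: conf_le_iff_map_le)
  show "monotone_on (Sub N) sub_le conf_le (delta_under N \<delta>)"
    by (rule monotone_delta_under)
  show "nat_le (Loc N) conf_le (delta_under N \<delta> \<circ> id) (delta_bar \<delta>)"
    by (rule delta_under_le_delta_bar)
  show "nat_le (Sub N) conf_le f (delta_under N \<delta>)"
    if "monotone_on (Sub N) sub_le conf_le f \<and> nat_le (Loc N) conf_le (f \<circ> id) (delta_bar \<delta>)"
    for f
    using that le_delta_under_if_le_delta_bar by blast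
qed

end
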